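(* Let $X$ be a finite quandle with connected components $C_1,\dots,C_k$, let $s=(x_1,\dots,x_n)\in X^n$, let $D_j=\{1\le i\le n:x_i\in C_j\}$ and $n_j=|D_j|$, and suppose $n_j>\max_{1\le r\le k}|C_r|$ for every $1\le j\le k$. Then the image in $S_{n_1}\times\dots\times S_{n_k}$ of the stabilizer of $s$ in $B_{n_1,\dots,n_k}$ surjects onto $(\mathbb Z/2\mathbb Z)^k$ under the sign homomorphisms.
   Context: A quandle is a set $X$ with an operation $x^y$ such that $x\mapsto x^y$ is bijective for each $y$, $(z^x)^y=(z^y)^{x^y}$ and $x^x=x$; its connected components are the classes of the smallest equivalence relation with $x\sim x^y$. $B_n$ acts on $X^n$ from the right by $(\dots,x_i,x_{i+1},\dots)^{\sigma_i}=(\dots,x_{i+1},x_i^{x_{i+1}},\dots)$, and $B_n\to S_n$ sends $\sigma_i\mapsto(i\ i+1)$. $S_{n_1}\times\dots\times S_{n_k}$ is identified with $\{\sigma\in S_n:\sigma(D_j)=D_j\ \forall j\}$, and $B_{n_1,\dots,n_k}$ is its preimage in $B_n$. The sign homomorphisms are the signs of the restrictions to each $D_j$. *)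

theory Defs
  imports "HOL-Combinatorics.Combinatorics"
begin

(* A quandle on the carrier X with operation op, op x y = x^y *)
definition quandle :: "'a set \<Rightarrow> ('a \<Rightarrow> 'a \<Rightarrow> 'a) \<Rightarrow> bool" where
  "quandle X op \<longleftrightarrow>
     (\<forall>x\<in>X. \<forall>y\<in>X. op x y \<in> X) \<and>
     (\<forall>y\<in>X. bij_betw (\<lambda>x. op x y) X X) \<and>
     (\<forall>x\<in>X. \<forall>y\<in>X. \<forall>z\<in>X. op (op z x) y = op (op z y) (op x y)) \<and>
     (\<forall>x\<in>X. op x x = x)"

definition qrel :: "'a set \<Rightarrow> ('a \<Rightarrow> 'a \<Rightarrow> 'a) \<Rightarrow> ('a \<times> 'a) set" where
  "qrel X op = (let R = {(x, op x y) | x y. x \<in> X \<and> y \<in> X} in (R \<union> R\<inverse>)\<^sup>* \<inter> (X \<times> X))"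

definition components :: "'a set \<Rightarrow> ('a \<Rightarrow> 'a \<Rightarrow> 'a) \<Rightarrow> 'a set set" where
  "components X op = X // qrel X op"

definition rinv :: "'a set \<Rightarrow> ('a \<Rightarrow> 'a \<Rightarrow> 'a) \<Rightarrow> 'a \<Rightarrow> 'a \<Rightarrow> 'a" where
  "rinv X op y a = (THE z. z \<in> X \<and> op z a = y)"

(* Braid words: (i, True) = sigma_(i+1), (i, False) = its inverse (0-indexed positions i, i+1) *)
type_synonym bword = "(nat \<times> bool) list"

definition valid_word :: "nat \<Rightarrow> bword \<Rightarrow> bool" where
  "valid_word n w \<longleftrightarrow> (\<forall>g\<in>set w. Suc (fst g) < n)"

fun act_gen :: "'a set \<Rightarrow> ('a \<Rightarrow> 'a \<Rightarrow> 'a) \<Rightarrow> 'a list \<Rightarrow> nat \<times> bool \<Rightarrow> 'a list" where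
  "act_gen X op xs (i, True) = xs[i := xs ! Suc i, Suc i := op (xs ! i) (xs ! Suc i)]"
| "act_gen X op xs (i, False) = xs[i := rinv X op (xs ! Suc i) (xs ! i), Suc i := xs ! i]"

definition act :: "'a set \<Rightarrow> ('a \<Rightarrow> 'a \<Rightarrow> 'a) \<Rightarrow> 'a list \<Rightarrow> bword \<Rightarrow> 'a list" where
  "act X op xs w = foldl (act_gen X op) xs w"

fun braid_perm :: "bword \<Rightarrow> nat \<Rightarrow> nat" where
  "braid_perm [] = id"
| "braid_perm (g # w) = transpose (fst g) (Suc (fst g)) \<circ> braid_perm w"

definition Dset :: "'a list \<Rightarrow> 'a set \<Rightarrow> nat set" where
  "Dset s C = {i. i < length s \<and> s ! i \<in> C}"

end

theory Submission
  imports Defs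
begin

(* Within a component C the entries of s indexed by D_C take at most |C| values, so since
   |D_C| > |C| two positions j < k of D_C carry the same element x. Conjugating sigma_j by the
   braid that brings position k next to position j gives a braid whose permutation is the
   transposition (j k), and it fixes s because x^x = x. Its sign is -1 on D_C and 1 on every
   other block, and products of such braids realise every sign vector. *)

definition inv_gen :: "nat \<times> bool \<Rightarrow> nat \<times> bool" where
  "inv_gen g = (fst g, \<not> snd g)"

definition inv_word :: "bword \<Rightarrow> bword" where
  "inv_word w = rev (map inv_gen w)"

lemma inv_word_Cons: "inv_word (g # w) = inv_word w @ [inv_gen g]"
  by (simp add: inv_word_def)

lemma valid_word_Cons [simp]: "valid_word n (g # w) \<longleftrightarrow> Suc (fst g) < n \<and> valid_word n w"
  by (simp add: valid_word_def)

lemma valid_word_append [simp]: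
  "valid_word n (u @ v) \<longleftrightarrow> valid_word n u \<and> valid_word n v"
  by (auto simp: valid_word_def)

lemma valid_word_inv_word [simp]: "valid_word n (inv_word w) \<longleftrightarrow> valid_word n w"
  by (auto simp: valid_word_def inv_word_def inv_gen_def)

lemma act_Nil [simp]: "act X op xs [] = xs"
  by (simp add: act_def)

lemma act_Cons: "act X op xs (g # w) = act X op (act_gen X op xs g) w"
  by (simp add: act_def)

lemma act_append: "act X op xs (u @ v) = act X op (act X op xs u) v"
  by (simp add: act_def)

lemma length_act_gen [simp]: "length (act_gen X op xs g) = length xs"
  by (induction X op xs g rule: act_gen.induct) simp_all

lemma length_act [simp]: "length (act X op xs w) = length xs"
  by (induction w arbitrary: xs) (simp_all add: act_Cons)

lemma braid_perm_append: "braid_perm (u @ v) = braid_perm u \<circ> braid_perm v"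
  by (induction u) auto

lemma bij_braid_perm: "bij (braid_perm w)"
proof (induction w)
  case Nil
  show ?case by (simp only: braid_perm.simps bij_id)
next
  case (Cons g w)
  show ?case
    unfolding braid_perm.simps by (rule bij_comp[OF Cons.IH bij_transpose])
qed

lemma braid_perm_inv_word: "braid_perm (inv_word w) = inv (braid_perm w)"
proof (induction w)
  case Nil
  show ?case by (simp add: inv_word_def)
next
  case (Cons g w)
  have "braid_perm (inv_word (g # w)) = inv (braid_perm w) \<circ> transpose (fst g) (Suc (fst g))"
    unfolding inv_word_Cons braid_perm_append Cons.IH by (simp add: inv_gen_def)
  also have "\<dots> = inv (braid_perm (g # w))"
    unfolding braid_perm.simps by (simp add: o_inv_distrib bij_braid_perm)
  finally show ?case .
qed

lemma bij_conj_transpose: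
  assumes "bij f"
  shows "f \<circ> transpose a b \<circ> inv f = transpose (f a) (f b)"
proof -
  have "transpose (f a) (f b) \<circ> f = f \<circ> transpose a b"
    using transpose_comp_eq[OF assms, of "f a" "f b"] assms by (simp add: bij_is_inj)
  then show ?thesis
    using assms by (metis comp_assoc comp_id bij_is_surj surj_iff)
qed

lemma braid_perm_conjugate:
  "braid_perm (u @ (j, b) # inv_word u) = transpose (braid_perm u j) (braid_perm u (Suc j))"
  using bij_conj_transpose[OF bij_braid_perm, of u j "Suc j"]
  by (simp add: braid_perm_append braid_perm_inv_word comp_assoc)

lemma quandle_rinv:
  assumes "quandle X op" "x \<in> X" "y \<in> X"
  shows "rinv X op x y \<in> X \<and> op (rinv X op x y) y = x"
proof -
  have bij: "bij_betw (\<lambda>z. op z y) X X"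
    using assms by (simp add: quandle_def)
  then obtain z where "z \<in> X" "op z y = x"
    using assms(2) by (metis bij_betw_imp_surj_on imageE)
  moreover have "z' = z" if "z' \<in> X" "op z' y = x" for z'
    using bij that \<open>z \<in> X\<close> \<open>op z y = x\<close> by (auto simp: bij_betw_def dest: inj_onD)
  ultimately have "\<exists>!z. z \<in> X \<and> op z y = x"
    by blast
  then show ?thesis
    unfolding rinv_def by (rule theI')
qed

lemma rinv_op:
  assumes "quandle X op" "x \<in> X" "y \<in> X"
  shows "rinv X op (op x y) y = x"
proof -
  have "inj_on (\<lambda>z. op z y) X"
    using assms by (simp add: quandle_def bij_betw_def)
  then show ?thesis
    unfolding rinv_def using assms by (intro the_equality) (auto dest: inj_onD)
qed

lemma act_gen_closed:
  assumes q: "quandle X op" and "set xs \<subseteq> X" "Suc (fst g) < length xs"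
  shows "set (act_gen X op xs g) \<subseteq> X"
proof -
  obtain i b where g: "g = (i, b)" by (cases g)
  have X: "xs ! i \<in> X" "xs ! Suc i \<in> X"
    using assms(2,3) g by (auto dest: nth_mem)
  have "op (xs ! i) (xs ! Suc i) \<in> X" "rinv X op (xs ! Suc i) (xs ! i) \<in> X"
    using X q quandle_rinv[OF q] by (simp_all add: quandle_def)
  then show ?thesis
    using assms(2) X g by (cases b) (simp_all add: set_update_subsetI)
qed

lemma act_gen_inv_gen:
  assumes q: "quandle X op" and "set xs \<subseteq> X" "Suc (fst g) < length xs"
  shows "act_gen X op (act_gen X op xs g) (inv_gen g) = xs"
proof -
  obtain i b where g: "g = (i, b)" by (cases g)
  have X: "xs ! i \<in> X" "xs ! Suc i \<in> X"
    using assms(2,3) g by (auto dest: nth_mem)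
  show ?thesis
  proof (cases b)
    case True
    have "rinv X op (op (xs ! i) (xs ! Suc i)) (xs ! Suc i) = xs ! i"
      using rinv_op[OF q X] .
    then show ?thesis
      using assms(3) g True by (simp add: inv_gen_def list_update_swap)
  next
    case False
    have "op (rinv X op (xs ! Suc i) (xs ! i)) (xs ! i) = xs ! Suc i"
      using quandle_rinv[OF q X(2,1)] by simp
    then show ?thesis
      using assms(3) g False by (simp add: inv_gen_def list_update_swap)
  qed
qed

lemma act_inv_word:
  assumes "quandle X op" "set xs \<subseteq> X" "valid_word (length xs) w"
  shows "act X op (act X op xs w) (inv_word w) = xs"
  using assms(2,3)
proof (induction w arbitrary: xs)
  case Nil
  then show ?case by (simp add: inv_word_def)
next
  case (Cons g w)
  have g: "Suc (fst g) < length xs" and w: "valid_word (length xs) w"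
    using Cons.prems(2) by simp_all
  have "act X op (act X op xs (g # w)) (inv_word (g # w))
      = act_gen X op (act X op (act X op (act_gen X op xs g) w) (inv_word w)) (inv_gen g)"
    by (simp add: act_Cons act_append inv_word_Cons)
  also have "\<dots> = act_gen X op (act_gen X op xs g) (inv_gen g)"
    using Cons.IH act_gen_closed[OF assms(1) Cons.prems(1) g] w by simp
  also have "\<dots> = xs"
    using act_gen_inv_gen[OF assms(1) Cons.prems(1) g] .
  finally show ?case .
qed

(* The word of the generators k - 1, ..., j + 1 (0-indexed) carries the entry at position k to
   position j + 1 and leaves the positions up to j untouched. *)

definition shift_word :: "nat \<Rightarrow> nat \<Rightarrow> bword" where
  "shift_word j k = map (\<lambda>m. (m, True)) (rev [Suc j..<k])"

lemma shift_word_Suc: "Suc j \<le> k \<Longrightarrow> shift_word j (Suc k) = (k, True) # shift_word j k"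
  by (simp add: shift_word_def)

lemma shift_word_self: "shift_word j (Suc j) = []"
  by (simp add: shift_word_def)

lemma valid_shift_word: "k < n \<Longrightarrow> valid_word n (shift_word j k)"
  by (auto simp: shift_word_def valid_word_def)

lemma act_shift_word:
  assumes "j < k" "k < length ys"
  shows "act X op ys (shift_word j k) ! j = ys ! j \<and>
         act X op ys (shift_word j k) ! Suc j = ys ! k"
  using assms
proof (induction k arbitrary: ys)
  case 0
  then show ?case by simp
next
  case (Suc k)
  show ?case
  proof (cases "k = j")
    case True
    then show ?thesis by (simp add: shift_word_self)
  next
    case False
    then have "j < k" using Suc.prems by simp
    moreover have "act_gen X op ys (k, True) ! j = ys ! j"
      "act_gen X op ys (k, True) ! k = ys ! Suc k"
      using \<open>j < k\<close> Suc.prems by (simp_all add: nth_list_update)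
    ultimately show ?thesis
      using Suc.IH[of "act_gen X op ys (k, True)"] Suc.prems
      by (simp add: shift_word_Suc act_Cons)
  qed
qed

lemma braid_perm_shift_word:
  assumes "j < k"
  shows "braid_perm (shift_word j k) j = j \<and> braid_perm (shift_word j k) (Suc j) = k"
  using assms
proof (induction k)
  case 0
  then show ?case by simp
next
  case (Suc k)
  show ?case
  proof (cases "k = j")
    case True
    then show ?thesis by (simp add: shift_word_self)
  next
    case False
    then show ?thesis
      using Suc by (simp add: shift_word_Suc transpose_def)
  qed
qed

lemma transposition_in_stabilizer:
  assumes q: "quandle X op" and "set s \<subseteq> X" and jk: "j < k" "k < length s"
    and "s ! j = s ! k"
  shows "\<exists>w. valid_word (length s) w \<and> act X op s w = s \<and> braid_perm w = transpose j k"
proof -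
  let ?u = "shift_word j k"
  let ?t = "act X op s ?u"
  define w where "w = ?u @ (j, True) # inv_word ?u"
  have t: "?t ! j = s ! j" "?t ! Suc j = s ! j"
    using act_shift_word[OF jk] \<open>s ! j = s ! k\<close> by simp_all
  have "op (s ! j) (s ! j) = s ! j"
    using q assms(2) jk by (simp add: quandle_def subset_iff)
  then have "act_gen X op ?t (j, True) = ?t[j := ?t ! j, Suc j := ?t ! Suc j]"
    using t by simp
  then have fixed: "act_gen X op ?t (j, True) = ?t"
    by simp
  have valid: "valid_word (length s) ?u"
    using jk by (intro valid_shift_word)
  have "act X op s w = act X op ?t (inv_word ?u)"
    unfolding w_def act_append act_Cons fixed ..
  also have "\<dots> = s"
    using act_inv_word[OF q assms(2) valid] .
  finally have "act X op s w = s" .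
  moreover have "valid_word (length s) w"
    using valid jk by (simp add: w_def)
  moreover have "braid_perm w = transpose j k"
    using braid_perm_shift_word[OF jk(1)] by (simp add: w_def braid_perm_conjugate)
  ultimately show ?thesis by blast
qed

lemma equiv_qrel: "equiv X (qrel X op)"
proof -
  define R where "R = {(x, op x y) | x y. x \<in> X \<and> y \<in> X}"
  have q: "qrel X op = (R \<union> R\<inverse>)\<^sup>* \<inter> X \<times> X"
    by (simp add: qrel_def R_def Let_def)
  have "sym ((R \<union> R\<inverse>)\<^sup>*)"
    by (rule sym_rtrancl[OF sym_Un_converse])
  then show ?thesis
    unfolding q by (intro equivI) (auto simp: refl_on_def sym_def trans_def intro: rtrancl_trans)
qed

lemma component_subset: "C \<in> components X op \<Longrightarrow> C \<subseteq> X"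
  unfolding components_def using in_quotient_imp_subset[OF equiv_qrel] by blast

lemma components_disjoint:
  "C \<in> components X op \<Longrightarrow> C' \<in> components X op \<Longrightarrow> x \<in> C \<Longrightarrow> x \<in> C' \<Longrightarrow> C = C'"
  unfolding components_def using quotient_disj[OF equiv_qrel] by blast

lemma finite_components: "finite X \<Longrightarrow> finite (components X op)"
  unfolding components_def by (rule finite_quotient) (auto simp: qrel_def Let_def)

definition in_block_stabilizer :: "'a set \<Rightarrow> ('a \<Rightarrow> 'a \<Rightarrow> 'a) \<Rightarrow> 'a list \<Rightarrow> bword \<Rightarrow> bool" where
  "in_block_stabilizer X op s w \<longleftrightarrow> valid_word (length s) w \<and> act X op s w = s \<and>
     (\<forall>C\<in>components X op. braid_perm w ` Dset s C = Dset s C)"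

lemma in_block_stabilizer_Nil: "in_block_stabilizer X op s []"
  by (simp add: in_block_stabilizer_def valid_word_def)

lemma in_block_stabilizer_append:
  "in_block_stabilizer X op s u \<Longrightarrow> in_block_stabilizer X op s v \<Longrightarrow>
   in_block_stabilizer X op s (u @ v)"
  unfolding in_block_stabilizer_def act_append braid_perm_append image_comp[symmetric] by simp

lemma finite_Dset: "finite (Dset s C)"
  by (rule finite_subset[of _ "{..<length s}"]) (auto simp: Dset_def)

lemma sign_on_block_append:
  assumes "in_block_stabilizer X op s u" "in_block_stabilizer X op s v" "C \<in> components X op"
  shows "sign_on (Dset s C) (braid_perm (u @ v)) =
         sign_on (Dset s C) (braid_perm u) * sign_on (Dset s C) (braid_perm v)"
proof -
  have "bij_betw (braid_perm w) (Dset s C) (Dset s C)" if "in_block_stabilizer X op s w" for w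
    using that assms(3) bij_braid_perm[of w]
    by (auto simp: in_block_stabilizer_def bij_betw_def bij_def intro: inj_on_subset)
  then show ?thesis
    unfolding braid_perm_append using assms(1,2) finite_Dset by (intro sign_on_compose)
qed

lemma repeated_entry_in_Dset:
  assumes "finite C" "card C < card (Dset s C)"
  obtains j k where "j < k" "j \<in> Dset s C" "k \<in> Dset s C" "s ! j = s ! k"
proof -
  have "card ((!) s ` Dset s C) \<le> card C"
    using assms(1) by (intro card_mono) (auto simp: Dset_def)
  then have "\<not> inj_on ((!) s) (Dset s C)"
    using assms(2) by (intro pigeonhole) simp
  then obtain a b where "a \<in> Dset s C" "b \<in> Dset s C" "a \<noteq> b" "s ! a = s ! b"
    by (auto simp: inj_on_def)
  then show ?thesis
    using that by (metis linorder_neqE_nat)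
qed

lemma sign_on_transpose_outside:
  assumes "a \<notin> A" "b \<notin> A"
  shows "sign_on A (transpose a b) = 1"
proof -
  have "sign_on A (transpose a b) = sign_on A id"
    using assms by (intro sign_on_cong) (auto simp: transpose_def)
  then show ?thesis by simp
qed

lemma block_stabilizer_odd_on_component:
  assumes q: "quandle X op" and "finite X" "set s \<subseteq> X"
    and C0: "C0 \<in> components X op" "card C0 < card (Dset s C0)"
  shows "\<exists>w. in_block_stabilizer X op s w \<and>
           (\<forall>C\<in>components X op. sign_on (Dset s C) (braid_perm w) = (if C = C0 then -1 else 1))"
proof -
  have "finite C0"
    using finite_subset[OF component_subset[OF C0(1)] \<open>finite X\<close>] .
  then obtain j k where jk: "j < k" "j \<in> Dset s C0" "k \<in> Dset s C0" "s ! j = s ! k"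
    using C0(2) by (rule repeated_entry_in_Dset)
  then have "k < length s"
    by (simp add: Dset_def)
  then obtain w where w: "valid_word (length s) w" "act X op s w = s" "braid_perm w = transpose j k"
    using transposition_in_stabilizer[OF q \<open>set s \<subseteq> X\<close> jk(1) _ jk(4)] by blast
  have same_block: "j \<in> Dset s C \<longleftrightarrow> k \<in> Dset s C" for C
    using jk \<open>k < length s\<close> by (auto simp: Dset_def)
  have "sign_on (Dset s C) (braid_perm w) = (if C = C0 then -1 else 1)"
    if C: "C \<in> components X op" for C
  proof (cases "C = C0")
    case True
    then show ?thesis
      using jk w(3) by (simp add: sign_on_transpose)
  next
    case False
    then have "j \<notin> Dset s C"
      using components_disjoint[OF C C0(1)] jk(2) by (auto simp: Dset_def)
    then show ?thesis
      using False same_block w(3) by (simp add: sign_on_transpose_outside)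
  qed
  moreover have "in_block_stabilizer X op s w"
    using w same_block by (simp add: in_block_stabilizer_def)
  ultimately show ?thesis by blast
qed

lemma block_stabilizer_sign_vector:
  assumes "quandle X op" "finite X" "set s \<subseteq> X"
    and big: "\<forall>C\<in>components X op. card C < card (Dset s C)"
    and "S \<subseteq> components X op"
  shows "\<exists>w. in_block_stabilizer X op s w \<and>
           (\<forall>C\<in>components X op. sign_on (Dset s C) (braid_perm w) = (if C \<in> S then -1 else 1))"
proof -
  have "finite S"
    using finite_subset[OF assms(5) finite_components[OF assms(2)]] .
  then show ?thesis
    using assms(5)
  proof (induction S rule: finite_induct)
    case empty
    show ?case
      by (intro exI[of _ "[]"]) (simp add: in_block_stabilizer_Nil)
  next
    case (insert C0 S)
    obtain u where u: "in_block_stabilizer X op s u"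
      "\<forall>C\<in>components X op. sign_on (Dset s C) (braid_perm u) = (if C \<in> S then -1 else 1)"
      using insert by blast
    obtain v where v: "in_block_stabilizer X op s v"
      "\<forall>C\<in>components X op. sign_on (Dset s C) (braid_perm v) = (if C = C0 then -1 else 1)"
      using block_stabilizer_odd_on_component[OF assms(1-3)] big insert.prems by blast
    show ?case
      using u v \<open>C0 \<notin> S\<close>
      by (intro exI[of _ "u @ v"]) (auto simp: in_block_stabilizer_append sign_on_block_append)
  qed
qed

theorem proposition4p35:
  fixes X :: "'a set" and op :: "'a \<Rightarrow> 'a \<Rightarrow> 'a" and s :: "'a list"
  assumes "quandle X op"
    and "finite X"
    and "set s \<subseteq> X"
    and "\<forall>C\<in>components X op. card (Dset s C) > Max (card ` components X op)"
  shows "\<forall>\<epsilon> :: 'a set \<Rightarrow> int. (\<forall>C\<in>components X op. \<epsilon> C \<in> {1, -1}) \<longrightarrow>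
           (\<exists>w. valid_word (length s) w \<and> act X op s w = s \<and>
                (\<forall>C\<in>components X op. braid_perm w ` Dset s C = Dset s C) \<and>
                (\<forall>C\<in>components X op. sign_on (Dset s C) (braid_perm w) = \<epsilon> C))"
proof (intro allI impI)
  fix \<epsilon> :: "'a set \<Rightarrow> int"
  assume \<epsilon>: "\<forall>C\<in>components X op. \<epsilon> C \<in> {1, -1}"
  have "card C \<le> Max (card ` components X op)" if "C \<in> components X op" for C
    using that finite_components[OF assms(2)] by simp
  then have "\<forall>C\<in>components X op. card C < card (Dset s C)"
    using assms(4) le_less_trans by blast
  then obtain w where w: "in_block_stabilizer X op s w"
    "\<forall>C\<in>components X op. sign_on (Dset s C) (braid_perm w) = (if \<epsilon> C = -1 then -1 else 1)"
    using block_stabilizer_sign_vector[OF assms(1-3), of "{C \<in> components X op. \<epsilon> C = -1}"] by auto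
  have "\<forall>C\<in>components X op. sign_on (Dset s C) (braid_perm w) = \<epsilon> C"
    using w(2) \<epsilon> by fastforce
  then show "\<exists>w. valid_word (length s) w \<and> act X op s w = s \<and>
                (\<forall>C\<in>components X op. braid_perm w ` Dset s C = Dset s C) \<and>
                (\<forall>C\<in>components X op. sign_on (Dset s C) (braid_perm w) = \<epsilon> C)"
    using w(1) unfolding in_block_stabilizer_def by blast
qed

end
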